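(* Assume condition (H). Then for all integers $0\le m\le n$ we have $d_{m,n}\le d_{m-1,n}$, and for all integers $-1\le m\le n$ we have $d_{m,n}\le d_{m,n+1}$. That is, in the region $m\le n$, $d_{m,n}$ is non-increasing in $m$ and non-decreasing in $n$.
   Context: Let $\mathbb{N}=\{0,1,2,\dots\}$. Fix a sequence $(\pi^n)_{n\in\mathbb{N}}$ where each $\pi^n=(\pi^n_i)_{i\in\mathbb{N}}$ is a probability distribution on $\mathbb{N}$ with support contained in $\{0,\dots,n\}$, and $\pi^n\ne\pi^m$ for $m\ne n$. Define reals $d_{m,n}$ for $m,n\in\mathbb{N}\cup\{-1\}$ recursively as follows: $d_{-1,-1}=0$, $d_{-1,j}=d_{j,-1}=1$ for $j\in\mathbb{N}$, and for $m,n\in\mathbb{N}$, $$d_{m,n}=\min_{z\in\mathcal{F}_{m,n}}\sum_{i=0}^m\sum_{j=0}^n z_{i,j}\,d_{i-1,j-1},$$ where $\mathcal{F}_{m,n}$ is the set of arrays $z=(z_{i,j})_{0\le i\le m,\,0\le j\le n}$ with $z_{i,j}\ge0$, $\sum_{j=0}^n z_{i,j}=\pi^m_i$ for all $i\le m$, and $\sum_{i=0}^m z_{i,j}=\pi^n_j$ for all $j\le n$. Condition (H) means: for every $n\ge1$, $\pi^n_n>0$ and $0\le\pi^n_i\le\pi^{n-1}_i$ for all $i<n$. *)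

theory Defs
  imports "HOL-Analysis.Analysis"
begin

definition admissible_seq :: "(nat \<Rightarrow> nat \<Rightarrow> real) \<Rightarrow> bool" where
  "admissible_seq \<pi> \<longleftrightarrow>
     (\<forall>n i. 0 \<le> \<pi> n i) \<and>
     (\<forall>n i. n < i \<longrightarrow> \<pi> n i = 0) \<and>
     (\<forall>n. (\<Sum>i\<le>n. \<pi> n i) = 1) \<and>
     (\<forall>m n. m \<noteq> n \<longrightarrow> \<pi> m \<noteq> \<pi> n)"

definition cond_H :: "(nat \<Rightarrow> nat \<Rightarrow> real) \<Rightarrow> bool" where
  "cond_H \<pi> \<longleftrightarrow> (\<forall>n\<ge>1. \<pi> n n > 0 \<and> (\<forall>i<n. 0 \<le> \<pi> n i \<and> \<pi> n i \<le> \<pi> (n-1) i))"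

text \<open>Couplings \<open>\<F>_{m,n}\<close>: arrays z indexed by \<open>0\<le>i\<le>m, 0\<le>j\<le>n\<close>
  (values outside this range are irrelevant).\<close>
definition couplings :: "(nat \<Rightarrow> nat \<Rightarrow> real) \<Rightarrow> nat \<Rightarrow> nat \<Rightarrow> (nat \<Rightarrow> nat \<Rightarrow> real) set" where
  "couplings \<pi> m n = {z. (\<forall>i\<le>m. \<forall>j\<le>n. 0 \<le> z i j) \<and>
       (\<forall>i\<le>m. (\<Sum>j\<le>n. z i j) = \<pi> m i) \<and>
       (\<forall>j\<le>n. (\<Sum>i\<le>m. z i j) = \<pi> n j)}"

text \<open>\<open>dd \<pi> a b = d_{a-1,b-1}\<close> (shifted so that indices are natural numbers).\<close>
function dd :: "(nat \<Rightarrow> nat \<Rightarrow> real) \<Rightarrow> nat \<Rightarrow> nat \<Rightarrow> real" where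
  "dd \<pi> a b =
     (if a = 0 \<and> b = 0 then 0
      else if a = 0 \<or> b = 0 then 1
      else Inf ((\<lambda>z. \<Sum>i\<le>a-1. \<Sum>j\<le>b-1. z i j * dd \<pi> i j) ` couplings \<pi> (a-1) (b-1)))"
  by auto
termination
  by (relation "Wellfounded.measure (\<lambda>(\<pi>,a,b). a + b)") auto

definition d :: "(nat \<Rightarrow> nat \<Rightarrow> real) \<Rightarrow> int \<Rightarrow> int \<Rightarrow> real" where
  "d \<pi> m n = dd \<pi> (nat (m + 1)) (nat (n + 1))"

end

theory Submission
  imports Defs
begin

text \<open>The numbers d_{m,n} are optimal transport costs between \<pi>^m and \<pi>^n for the cost
  matrix d_{i-1,j-1}; by induction they form a metric bounded by 1, the triangle inequality
  coming from gluing couplings.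
  Under (H) we have \<pi>^n_k \<le> \<pi>^m_k for k \<le> m \<le> n, and rerouting mass through the diagonal
  (free of charge by the triangle inequality) turns every coupling of \<pi>^m and \<pi>^n into one that
  is no more expensive and carries the full mass \<pi>^n_k at (k, k) for every k \<le> m. Such a
  saturated coupling can be converted into a coupling of \<pi>^{m+1} and \<pi>^n, respectively of
  \<pi>^m and \<pi>^{n-1}, by moving mass only onto the diagonal or onto entries in columns beyond m
  that are cheaper by the induction hypothesis for smaller n. Hence both monotonicity
  statements follow by strong induction on n.\<close>

section \<open>Couplings\<close>

definition is_coupling ::
    "(nat \<Rightarrow> real) \<Rightarrow> (nat \<Rightarrow> real) \<Rightarrow> nat \<Rightarrow> nat \<Rightarrow> (nat \<Rightarrow> nat \<Rightarrow> real) \<Rightarrow> bool" where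
  "is_coupling \<mu> \<nu> m n z \<longleftrightarrow> (\<forall>i\<le>m. \<forall>j\<le>n. 0 \<le> z i j) \<and>
     (\<forall>i\<le>m. (\<Sum>j\<le>n. z i j) = \<mu> i) \<and> (\<forall>j\<le>n. (\<Sum>i\<le>m. z i j) = \<nu> j)"

definition transport_cost :: "(nat \<Rightarrow> nat \<Rightarrow> real) \<Rightarrow> nat \<Rightarrow> nat \<Rightarrow> (nat \<Rightarrow> nat \<Rightarrow> real) \<Rightarrow> real" where
  "transport_cost C m n z = (\<Sum>i\<le>m. \<Sum>j\<le>n. z i j * C i j)"

lemma mem_couplings_iff: "z \<in> couplings \<pi> m n \<longleftrightarrow> is_coupling (\<pi> m) (\<pi> n) m n z"
  by (simp add: couplings_def is_coupling_def)

lemma is_couplingD: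
  assumes "is_coupling \<mu> \<nu> m n z"
  shows is_coupling_nonneg: "i \<le> m \<Longrightarrow> j \<le> n \<Longrightarrow> 0 \<le> z i j"
    and is_coupling_row_sum: "i \<le> m \<Longrightarrow> (\<Sum>j\<le>n. z i j) = \<mu> i"
    and is_coupling_col_sum: "j \<le> n \<Longrightarrow> (\<Sum>i\<le>m. z i j) = \<nu> j"
  using assms by (auto simp: is_coupling_def)

lemma is_coupling_marginals_nonneg:
  assumes "is_coupling \<mu> \<nu> m n z"
  shows "i \<le> m \<Longrightarrow> 0 \<le> \<mu> i" and "j \<le> n \<Longrightarrow> 0 \<le> \<nu> j"
  using assms unfolding is_coupling_def by (metis atMost_iff sum_nonneg)+

lemma is_coupling_le_col_marginal:
  assumes z: "is_coupling \<mu> \<nu> m n z" and "i \<le> m" "j \<le> n"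
  shows "z i j \<le> \<nu> j"
proof -
  have "z i j \<le> (\<Sum>l\<le>m. z l j)"
    using assms by (intro member_le_sum) (auto intro: is_coupling_nonneg[OF z])
  then show ?thesis using is_coupling_col_sum[OF z \<open>j \<le> n\<close>] by simp
qed

lemma is_coupling_zero_col:
  assumes z: "is_coupling \<mu> \<nu> m n z" and "i \<le> m" "j \<le> n" "\<nu> j = 0"
  shows "z i j = 0"
  using assms sum_nonneg_eq_0_iff[of "{..m}" "\<lambda>i. z i j"]
  by (auto simp: is_coupling_def)

lemma is_coupling_zero_row:
  assumes z: "is_coupling \<mu> \<nu> m n z" and "i \<le> m" "j \<le> n" "\<mu> i = 0"
  shows "z i j = 0"
  using assms sum_nonneg_eq_0_iff[of "{..n}" "\<lambda>j. z i j"]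
  by (auto simp: is_coupling_def)

lemma saturated_coupling_offdiag:
  assumes z: "is_coupling \<mu> \<nu> m n z" and "m \<le> n" and sat: "\<And>k. k \<le> m \<Longrightarrow> z k k = \<nu> k"
    and "i \<le> m" "j \<le> m" "i \<noteq> j"
  shows "z i j = 0"
proof -
  have "\<nu> j = z j j + (\<Sum>l\<in>{..m} - {j}. z l j)"
    using assms is_coupling_col_sum[OF z, of j] sum.remove[of "{..m}" j "\<lambda>l. z l j"] by simp
  then have "(\<Sum>l\<in>{..m} - {j}. z l j) = 0" using sat \<open>j \<le> m\<close> by simp
  then show ?thesis
    using assms is_coupling_nonneg[OF z] sum_nonneg_eq_0_iff[of "{..m} - {j}" "\<lambda>l. z l j"] by auto
qed

lemma product_is_coupling:
  assumes "\<And>i. 0 \<le> \<mu> i" "\<And>j. 0 \<le> \<nu> j" "(\<Sum>i\<le>m. \<mu> i) = 1" "(\<Sum>j\<le>n. \<nu> j) = 1"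
  shows "is_coupling \<mu> \<nu> m n (\<lambda>i j. \<mu> i * \<nu> j)"
  using assms by (simp add: is_coupling_def flip: sum_distrib_left sum_distrib_right)

lemma diagonal_is_coupling:
  assumes "\<And>i. 0 \<le> \<mu> i"
  shows "is_coupling \<mu> \<mu> m m (\<lambda>i j. if i = j then \<mu> i else 0)"
  using assms by (auto simp: is_coupling_def if_distrib sum.delta cong: if_cong)

lemma coupling_gluing:
  assumes z1: "is_coupling \<mu> \<nu> a b z1" and z2: "is_coupling \<nu> \<rho> b c z2"
  obtains w where "\<And>i j k. i \<le> a \<Longrightarrow> j \<le> b \<Longrightarrow> k \<le> c \<Longrightarrow> 0 \<le> w i j k"
    and "\<And>i j. i \<le> a \<Longrightarrow> j \<le> b \<Longrightarrow> (\<Sum>k\<le>c. w i j k) = z1 i j"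
    and "\<And>j k. j \<le> b \<Longrightarrow> k \<le> c \<Longrightarrow> (\<Sum>i\<le>a. w i j k) = z2 j k"
proof
  define w where "w i j k = (if \<nu> j = 0 then 0 else z1 i j * z2 j k / \<nu> j)" for i j k
  show "0 \<le> w i j k" if "i \<le> a" "j \<le> b" "k \<le> c" for i j k
    using that is_coupling_nonneg[OF z1] is_coupling_nonneg[OF z2]
      is_coupling_marginals_nonneg(2)[OF z1 \<open>j \<le> b\<close>]
    by (simp add: w_def)
  show "(\<Sum>k\<le>c. w i j k) = z1 i j" if "i \<le> a" "j \<le> b" for i j
  proof (cases "\<nu> j = 0")
    case True
    then show ?thesis using is_coupling_zero_col[OF z1 that True] by (simp add: w_def)
  next
    case False
    then show ?thesis
      using is_coupling_row_sum[OF z2 \<open>j \<le> b\<close>]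
      by (simp add: w_def flip: sum_distrib_left sum_divide_distrib)
  qed
  show "(\<Sum>i\<le>a. w i j k) = z2 j k" if "j \<le> b" "k \<le> c" for j k
  proof (cases "\<nu> j = 0")
    case True
    then show ?thesis using is_coupling_zero_row[OF z2 that True] by (simp add: w_def)
  next
    case False
    then show ?thesis
      using is_coupling_col_sum[OF z1 \<open>j \<le> b\<close>]
      by (simp add: w_def flip: sum_distrib_right sum_divide_distrib)
  qed
qed

lemma coupling_composition:
  assumes z1: "is_coupling \<mu> \<nu> a b z1" and z2: "is_coupling \<nu> \<rho> b c z2"
    and triangle: "\<And>i j k. i \<le> a \<Longrightarrow> j \<le> b \<Longrightarrow> k \<le> c \<Longrightarrow> C i k \<le> C i j + C j k"
  obtains u where "is_coupling \<mu> \<rho> a c u"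
    and "transport_cost C a c u \<le> transport_cost C a b z1 + transport_cost C b c z2"
proof -
  obtain w where w_nonneg: "\<And>i j k. i \<le> a \<Longrightarrow> j \<le> b \<Longrightarrow> k \<le> c \<Longrightarrow> 0 \<le> w i j k"
    and sum_k: "\<And>i j. i \<le> a \<Longrightarrow> j \<le> b \<Longrightarrow> (\<Sum>k\<le>c. w i j k) = z1 i j"
    and sum_i: "\<And>j k. j \<le> b \<Longrightarrow> k \<le> c \<Longrightarrow> (\<Sum>i\<le>a. w i j k) = z2 j k"
    using coupling_gluing[OF z1 z2] by blast
  define u where "u i k = (\<Sum>j\<le>b. w i j k)" for i k
  have "is_coupling \<mu> \<rho> a c u"
    unfolding is_coupling_def
  proof (intro conjI allI impI)
    fix i k assume "i \<le> a" "k \<le> c"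
    then show "0 \<le> u i k" unfolding u_def by (auto intro!: sum_nonneg w_nonneg)
  next
    fix i assume "i \<le> a"
    have "(\<Sum>k\<le>c. u i k) = (\<Sum>j\<le>b. \<Sum>k\<le>c. w i j k)"
      unfolding u_def by (rule sum.swap)
    then show "(\<Sum>k\<le>c. u i k) = \<mu> i"
      using \<open>i \<le> a\<close> by (simp add: sum_k is_coupling_row_sum[OF z1])
  next
    fix k assume "k \<le> c"
    have "(\<Sum>i\<le>a. u i k) = (\<Sum>j\<le>b. \<Sum>i\<le>a. w i j k)"
      unfolding u_def by (rule sum.swap)
    then show "(\<Sum>i\<le>a. u i k) = \<rho> k"
      using \<open>k \<le> c\<close> by (simp add: sum_i is_coupling_col_sum[OF z2])
  qed
  moreover have "transport_cost C a c u \<le> transport_cost C a b z1 + transport_cost C b c z2"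
  proof -
    have "transport_cost C a c u = (\<Sum>i\<le>a. \<Sum>j\<le>b. \<Sum>k\<le>c. w i j k * C i k)"
      unfolding transport_cost_def u_def sum_distrib_right
      by (intro sum.cong refl sum.swap)
    also have "\<dots> \<le> (\<Sum>i\<le>a. \<Sum>j\<le>b. \<Sum>k\<le>c. w i j k * C i j + w i j k * C j k)"
      by (intro sum_mono) (simp add: w_nonneg triangle mult_left_mono flip: distrib_left)
    also have "\<dots> = (\<Sum>i\<le>a. \<Sum>j\<le>b. (\<Sum>k\<le>c. w i j k) * C i j)
        + (\<Sum>j\<le>b. \<Sum>k\<le>c. (\<Sum>i\<le>a. w i j k) * C j k)"
      by (simp add: sum.distrib sum_distrib_right sum.swap[of _ "{..a}"]
          sum.swap[of _ "{..b}" "{..c}"])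
    also have "\<dots> = transport_cost C a b z1 + transport_cost C b c z2"
      by (simp add: transport_cost_def sum_k sum_i)
    finally show ?thesis .
  qed
  ultimately show ?thesis using that by blast
qed

lemma cost_via_intermediate_le:
  fixes a b :: "nat \<Rightarrow> real" and C :: "nat \<Rightarrow> nat \<Rightarrow> real"
  assumes "\<And>l. l \<le> m \<Longrightarrow> 0 \<le> a l" "\<And>j. j \<le> n \<Longrightarrow> 0 \<le> b j"
    and triangle: "\<And>l j. l \<le> m \<Longrightarrow> j \<le> n \<Longrightarrow> C l j \<le> C l k + C k j"
  shows "(\<Sum>l\<le>m. \<Sum>j\<le>n. a l * b j * C l j)
    \<le> (\<Sum>l\<le>m. a l * C l k) * (\<Sum>j\<le>n. b j) + (\<Sum>l\<le>m. a l) * (\<Sum>j\<le>n. b j * C k j)"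
proof -
  have "(\<Sum>l\<le>m. \<Sum>j\<le>n. a l * b j * C l j) \<le> (\<Sum>l\<le>m. \<Sum>j\<le>n. a l * b j * (C l k + C k j))"
    using assms by (intro sum_mono mult_left_mono) (auto intro: mult_nonneg_nonneg)
  also have "\<dots> = (\<Sum>l\<le>m. \<Sum>j\<le>n. (a l * C l k) * b j + a l * (b j * C k j))"
    by (simp add: algebra_simps)
  also have "\<dots> = (\<Sum>l\<le>m. a l * C l k) * (\<Sum>j\<le>n. b j) + (\<Sum>l\<le>m. a l) * (\<Sum>j\<le>n. b j * C k j)"
    by (simp add: sum.distrib sum_product)
  finally show ?thesis .
qed

section \<open>Saturating the diagonal\<close>

locale diagonal_rerouting =
  fixes \<mu> \<nu> :: "nat \<Rightarrow> real" and m n k :: nat and z :: "nat \<Rightarrow> nat \<Rightarrow> real"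
  assumes coupling: "is_coupling \<mu> \<nu> m n z"
    and k_le: "k \<le> m" "k \<le> n"
    and dominated: "\<nu> k \<le> \<mu> k"
    and deficient: "z k k < \<nu> k"
begin

definition col_rest :: "nat \<Rightarrow> real" where "col_rest l = (if l = k then 0 else z l k)"
definition row_rest :: "nat \<Rightarrow> real" where "row_rest j = (if j = k then 0 else z k j)"
definition deficit :: real where "deficit = (\<Sum>l\<le>m. col_rest l)"
definition surplus :: real where "surplus = (\<Sum>j\<le>n. row_rest j)"
definition share :: "nat \<Rightarrow> real" where "share j = row_rest j / surplus"

text \<open>The off-diagonal mass of column \<open>k\<close> is forwarded along row \<open>k\<close>, in proportion to its
  entries; row \<open>k\<close> gives up the same total amount, which fills the diagonal entry \<open>(k, k)\<close>.\<close>
definition rerouted :: "nat \<Rightarrow> nat \<Rightarrow> real" where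
  "rerouted l j = z l j + col_rest l * share j - (if j = k then col_rest l else 0)
     - (if l = k then deficit * share j else 0) + (if l = k \<and> j = k then deficit else 0)"

lemma deficit_eq: "deficit = \<nu> k - z k k"
proof -
  have "deficit = (\<Sum>l\<le>m. z l k - (if l = k then z k k else 0))"
    unfolding deficit_def col_rest_def by (rule sum.cong) auto
  then show ?thesis using k_le by (simp add: sum_subtractf is_coupling_col_sum[OF coupling])
qed

lemma surplus_eq: "surplus = \<mu> k - z k k"
proof -
  have "surplus = (\<Sum>j\<le>n. z k j - (if j = k then z k k else 0))"
    unfolding surplus_def row_rest_def by (rule sum.cong) auto
  then show ?thesis using k_le by (simp add: sum_subtractf is_coupling_row_sum[OF coupling])
qed

lemma deficit_pos: "0 < deficit"
  using deficient by (simp add: deficit_eq)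

lemma deficit_le_surplus: "deficit \<le> surplus"
  using dominated by (simp add: deficit_eq surplus_eq)

lemma col_rest_nonneg: "l \<le> m \<Longrightarrow> 0 \<le> col_rest l"
  using k_le by (simp add: col_rest_def is_coupling_nonneg[OF coupling])

lemma share_nonneg: "j \<le> n \<Longrightarrow> 0 \<le> share j"
  using k_le deficit_pos deficit_le_surplus
  by (simp add: share_def row_rest_def is_coupling_nonneg[OF coupling])

lemma sum_share: "(\<Sum>j\<le>n. share j) = 1"
  using deficit_pos deficit_le_surplus by (simp add: share_def surplus_def flip: sum_divide_distrib)

lemma share_k [simp]: "share k = 0"
  by (simp add: share_def row_rest_def)

lemma rerouted_diag: "rerouted k k = \<nu> k"
  by (simp add: rerouted_def col_rest_def share_def row_rest_def deficit_eq)

lemma rerouted_nonneg: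
  assumes "l \<le> m" "j \<le> n"
  shows "0 \<le> rerouted l j"
proof -
  have "deficit * share j \<le> z k j" if "j \<noteq> k"
  proof -
    have "deficit * share j \<le> surplus * share j"
      using deficit_le_surplus share_nonneg[OF \<open>j \<le> n\<close>] by (rule mult_right_mono)
    then show ?thesis
      using that deficit_pos deficit_le_surplus by (simp add: share_def row_rest_def)
  qed
  moreover have "0 \<le> z l j + col_rest l * share j"
    using assms col_rest_nonneg share_nonneg is_coupling_nonneg[OF coupling] by simp
  ultimately show ?thesis
    using assms rerouted_diag is_coupling_marginals_nonneg(2)[OF coupling]
    by (cases "l = k"; cases "j = k") (auto simp: rerouted_def col_rest_def)
qed

lemma diag_le_rerouted: "i \<le> m \<Longrightarrow> i \<le> n \<Longrightarrow> z i i \<le> rerouted i i"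
  using deficient col_rest_nonneg share_nonneg rerouted_diag
  by (cases "i = k") (auto simp: rerouted_def)

lemma rerouted_is_coupling: "is_coupling \<mu> \<nu> m n rerouted"
  unfolding is_coupling_def
proof (intro conjI allI impI)
  fix l j assume "l \<le> m" "j \<le> n"
  then show "0 \<le> rerouted l j" by (rule rerouted_nonneg)
next
  fix l assume "l \<le> m"
  have "(\<Sum>j\<le>n. rerouted l j) = (\<Sum>j\<le>n. z l j) + (\<Sum>j\<le>n. col_rest l * share j)
      - (\<Sum>j\<le>n. if j = k then col_rest l else 0) - (\<Sum>j\<le>n. if l = k then deficit * share j else 0)
      + (\<Sum>j\<le>n. if l = k \<and> j = k then deficit else 0)"
    unfolding rerouted_def by (simp only: sum.distrib sum_subtractf)
  then show "(\<Sum>j\<le>n. rerouted l j) = \<mu> l"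
    using \<open>l \<le> m\<close> k_le
    by (cases "l = k")
      (simp_all add: sum_share is_coupling_row_sum[OF coupling] flip: sum_distrib_left)
next
  fix j assume "j \<le> n"
  have "(\<Sum>l\<le>m. rerouted l j) = (\<Sum>l\<le>m. z l j) + (\<Sum>l\<le>m. col_rest l * share j)
      - (\<Sum>l\<le>m. if j = k then col_rest l else 0) - (\<Sum>l\<le>m. if l = k then deficit * share j else 0)
      + (\<Sum>l\<le>m. if l = k \<and> j = k then deficit else 0)"
    unfolding rerouted_def by (simp only: sum.distrib sum_subtractf)
  then show "(\<Sum>l\<le>m. rerouted l j) = \<nu> j"
    using \<open>j \<le> n\<close> k_le
    by (cases "j = k")
      (simp_all add: deficit_def is_coupling_col_sum[OF coupling] flip: sum_distrib_right)
qed

lemma rerouted_cost_le: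
  assumes "C k k = 0" and triangle: "\<And>l j. l \<le> m \<Longrightarrow> j \<le> n \<Longrightarrow> C l j \<le> C l k + C k j"
  shows "transport_cost C m n rerouted \<le> transport_cost C m n z"
proof -
  have col_k: "(\<Sum>l\<le>m. \<Sum>j\<le>n. (if j = k then col_rest l else 0) * C l j) = (\<Sum>l\<le>m. col_rest l * C l k)"
    using k_le by (simp add: if_distrib[where f="\<lambda>x. x * _"] sum.delta cong: if_cong)
  have "(\<Sum>l\<le>m. \<Sum>j\<le>n. (if l = k then deficit * share j else 0) * C l j)
      = (\<Sum>l\<le>m. if l = k then deficit * (\<Sum>j\<le>n. share j * C k j) else 0)"
    by (rule sum.cong) (auto simp: sum_distrib_left mult.assoc)
  then have row_k: "(\<Sum>l\<le>m. \<Sum>j\<le>n. (if l = k then deficit * share j else 0) * C l j)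
      = deficit * (\<Sum>j\<le>n. share j * C k j)"
    using k_le by simp
  have diag: "(\<Sum>l\<le>m. \<Sum>j\<le>n. (if l = k \<and> j = k then deficit else 0) * C l j) = 0"
    using \<open>C k k = 0\<close> by (simp add: if_distrib[where f="\<lambda>x. x * _"] cong: if_cong)
  have "transport_cost C m n rerouted = transport_cost C m n z
      + (\<Sum>l\<le>m. \<Sum>j\<le>n. col_rest l * share j * C l j)
      - (\<Sum>l\<le>m. \<Sum>j\<le>n. (if j = k then col_rest l else 0) * C l j)
      - (\<Sum>l\<le>m. \<Sum>j\<le>n. (if l = k then deficit * share j else 0) * C l j)
      + (\<Sum>l\<le>m. \<Sum>j\<le>n. (if l = k \<and> j = k then deficit else 0) * C l j)"
    unfolding transport_cost_def rerouted_def
    by (simp only: distrib_right left_diff_distrib sum.distrib sum_subtractf)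
  also have "\<dots> = transport_cost C m n z + (\<Sum>l\<le>m. \<Sum>j\<le>n. col_rest l * share j * C l j)
      - (\<Sum>l\<le>m. col_rest l * C l k) - deficit * (\<Sum>j\<le>n. share j * C k j)"
    by (simp only: col_k row_k diag add_0_right)
  also have "\<dots> \<le> transport_cost C m n z"
    using cost_via_intermediate_le[of m col_rest n share C k] col_rest_nonneg share_nonneg triangle
    by (simp add: sum_share deficit_def)
  finally show ?thesis .
qed

end

lemma exists_saturated_coupling:
  assumes z: "is_coupling \<mu> \<nu> m n z" and "m \<le> n"
    and dominated: "\<And>k. k \<le> m \<Longrightarrow> \<nu> k \<le> \<mu> k"
    and diag: "\<And>k. k \<le> m \<Longrightarrow> C k k = 0"
    and triangle: "\<And>l k j. l \<le> m \<Longrightarrow> k \<le> m \<Longrightarrow> j \<le> n \<Longrightarrow> C l j \<le> C l k + C k j"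
  obtains z' where "is_coupling \<mu> \<nu> m n z'"
    and "transport_cost C m n z' \<le> transport_cost C m n z"
    and "\<And>k. k \<le> m \<Longrightarrow> z' k k = \<nu> k"
proof -
  have "\<exists>z'. is_coupling \<mu> \<nu> m n z' \<and> transport_cost C m n z' \<le> transport_cost C m n z
      \<and> (\<forall>k<K. k \<le> m \<longrightarrow> z' k k = \<nu> k)" for K
  proof (induction K)
    case 0
    then show ?case using z by auto
  next
    case (Suc K)
    then obtain z1 where z1: "is_coupling \<mu> \<nu> m n z1"
      "transport_cost C m n z1 \<le> transport_cost C m n z" "\<forall>k<K. k \<le> m \<longrightarrow> z1 k k = \<nu> k"
      by blast
    show ?case
    proof (cases "K \<le> m \<and> z1 K K < \<nu> K")
      case True
      then interpret diagonal_rerouting \<mu> \<nu> m n K z1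
        using z1(1) \<open>m \<le> n\<close> dominated by unfold_locales auto
      txt \<open>Rerouting does not decrease diagonal entries, which are bounded by the column
        marginals; so the entries saturated before stay saturated.\<close>
      have "rerouted k k = \<nu> k" if "k < Suc K" "k \<le> m" for k
        using that z1(3) rerouted_diag diag_le_rerouted[of k] \<open>m \<le> n\<close>
          is_coupling_le_col_marginal[OF rerouted_is_coupling, of k k]
        by (cases "k = K") (auto intro: antisym)
      then show ?thesis
        using rerouted_is_coupling rerouted_cost_le[of C] diag triangle True z1(2) \<open>m \<le> n\<close>
        by (meson dual_order.trans)
    next
      case False
      then have "\<forall>k<Suc K. k \<le> m \<longrightarrow> z1 k k = \<nu> k"
        using z1(3) is_coupling_le_col_marginal[OF z1(1)] \<open>m \<le> n\<close>
        by (metis antisym_conv2 le_trans less_Suc_eq)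
      then show ?thesis using z1(1,2) by blast
    qed
  qed
  from this[of "Suc m"] that show ?thesis by auto
qed

section \<open>Adding a row and removing a column\<close>

locale row_transfer =
  fixes \<mu> \<mu>' \<nu> :: "nat \<Rightarrow> real" and m n :: nat and z :: "nat \<Rightarrow> nat \<Rightarrow> real"
  assumes coupling: "is_coupling \<mu> \<nu> m n z" and m_less: "m < n"
    and saturated: "\<And>k. k \<le> m \<Longrightarrow> z k k = \<nu> k"
    and between: "\<And>k. k \<le> m \<Longrightarrow> \<nu> k \<le> \<mu>' k" "\<And>k. k \<le> m \<Longrightarrow> \<mu>' k \<le> \<mu> k"
    and mass: "(\<Sum>k\<le>m. \<mu> k) = 1" "(\<Sum>k\<le>Suc m. \<mu>' k) = 1"
begin

definition fraction :: "nat \<Rightarrow> real" where "fraction k = (\<mu> k - \<mu>' k) / (\<mu> k - \<nu> k)"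
definition beyond :: "nat \<Rightarrow> nat \<Rightarrow> real" where "beyond k j = (if j \<le> m then 0 else z k j)"

text \<open>By saturation, the off-diagonal mass \<open>\<mu> k - \<nu> k\<close> of row \<open>k\<close> lies in the columns
  beyond \<open>m\<close>; row \<open>k\<close> hands the part \<open>\<mu> k - \<mu>' k\<close> of it, proportionally, to the new row \<open>m + 1\<close>.\<close>
definition transferred :: "nat \<Rightarrow> nat \<Rightarrow> real" where
  "transferred i j =
     (if i \<le> m then z i j - fraction i * beyond i j else (\<Sum>k\<le>m. fraction k * beyond k j))"

lemma fraction_bounds: "k \<le> m \<Longrightarrow> 0 \<le> fraction k \<and> fraction k \<le> 1"
  using between[of k] by (auto simp: fraction_def divide_le_eq_1 intro!: divide_nonneg_nonneg)

lemma fraction_mult: "k \<le> m \<Longrightarrow> fraction k * (\<mu> k - \<nu> k) = \<mu> k - \<mu>' k"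
  using between[of k] by (cases "\<mu> k = \<nu> k") (auto simp: fraction_def)

lemma beyond_nonneg: "k \<le> m \<Longrightarrow> j \<le> n \<Longrightarrow> 0 \<le> beyond k j"
  by (simp add: beyond_def is_coupling_nonneg[OF coupling])

lemma sum_beyond: "k \<le> m \<Longrightarrow> (\<Sum>j\<le>n. beyond k j) = \<mu> k - \<nu> k"
proof -
  assume "k \<le> m"
  have "(\<Sum>j\<le>n. z k j - beyond k j) = (\<Sum>j\<le>n. if j = k then \<nu> k else 0)"
    using saturated_coupling_offdiag[OF coupling _ saturated \<open>k \<le> m\<close>] m_less \<open>k \<le> m\<close> saturated
    by (intro sum.cong) (auto simp: beyond_def)
  then show ?thesis
    using \<open>k \<le> m\<close> m_less by (simp add: sum_subtractf is_coupling_row_sum[OF coupling])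
qed

lemma transferred_is_coupling: "is_coupling \<mu>' \<nu> (Suc m) n transferred"
  unfolding is_coupling_def
proof (intro conjI allI impI)
  fix i j assume "i \<le> Suc m" "j \<le> n"
  then show "0 \<le> transferred i j"
    using fraction_bounds beyond_nonneg is_coupling_nonneg[OF coupling]
    by (auto simp: transferred_def beyond_def intro!: sum_nonneg mult_left_le_one_le)
next
  fix i assume "i \<le> Suc m"
  show "(\<Sum>j\<le>n. transferred i j) = \<mu>' i"
  proof (cases "i \<le> m")
    case True
    then show ?thesis
      using sum_beyond fraction_mult
      by (simp add: transferred_def sum_subtractf is_coupling_row_sum[OF coupling]
          flip: sum_distrib_left)
  next
    case False
    then have "(\<Sum>j\<le>n. transferred i j) = (\<Sum>k\<le>m. fraction k * (\<Sum>j\<le>n. beyond k j))"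
      by (simp add: transferred_def sum_distrib_left sum.swap[of _ "{..n}"])
    also have "\<dots> = (\<Sum>k\<le>m. \<mu> k) - (\<Sum>k\<le>m. \<mu>' k)"
      by (simp add: sum_beyond fraction_mult sum_subtractf)
    also have "\<dots> = \<mu>' i"
      using mass False \<open>i \<le> Suc m\<close> by (simp add: le_Suc_eq)
    finally show ?thesis .
  qed
next
  fix j assume "j \<le> n"
  then show "(\<Sum>i\<le>Suc m. transferred i j) = \<nu> j"
    by (simp add: transferred_def sum_subtractf is_coupling_col_sum[OF coupling])
qed

lemma transferred_cost_le:
  assumes cheaper: "\<And>k j. k \<le> m \<Longrightarrow> m < j \<Longrightarrow> j \<le> n \<Longrightarrow> C (Suc m) j \<le> C k j"
  shows "transport_cost C (Suc m) n transferred \<le> transport_cost C m n z"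
proof -
  have old_rows: "(\<Sum>k\<le>m. \<Sum>j\<le>n. transferred k j * C k j)
      = transport_cost C m n z - (\<Sum>k\<le>m. \<Sum>j\<le>n. fraction k * beyond k j * C k j)"
    unfolding transport_cost_def
    by (simp add: transferred_def left_diff_distrib sum_subtractf)
  have "(\<Sum>j\<le>n. transferred (Suc m) j * C (Suc m) j)
      = (\<Sum>j\<le>n. \<Sum>k\<le>m. fraction k * beyond k j * C (Suc m) j)"
    by (simp add: transferred_def sum_distrib_right)
  then have new_row: "(\<Sum>j\<le>n. transferred (Suc m) j * C (Suc m) j)
      = (\<Sum>k\<le>m. \<Sum>j\<le>n. fraction k * beyond k j * C (Suc m) j)"
    by (simp only: sum.swap[of _ "{..m}" "{..n}"])
  have "(\<Sum>k\<le>m. \<Sum>j\<le>n. fraction k * beyond k j * C (Suc m) j)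
      \<le> (\<Sum>k\<le>m. \<Sum>j\<le>n. fraction k * beyond k j * C k j)"
  proof (intro sum_mono)
    fix k j assume "k \<in> {..m}" "j \<in> {..n}"
    then show "fraction k * beyond k j * C (Suc m) j \<le> fraction k * beyond k j * C k j"
      using cheaper[of k j] fraction_bounds[of k] beyond_nonneg[of k j]
      by (cases "j \<le> m") (simp_all add: beyond_def mult_left_mono)
  qed
  then show ?thesis
    using old_rows new_row by (simp add: transport_cost_def)
qed

end

locale column_merge =
  fixes \<mu> \<nu> \<nu>' :: "nat \<Rightarrow> real" and m n :: nat and z :: "nat \<Rightarrow> nat \<Rightarrow> real"
  assumes coupling: "is_coupling \<mu> \<nu>' m (Suc n) z" and m_less: "m < n"
    and saturated: "\<And>k. k \<le> m \<Longrightarrow> z k k = \<nu>' k"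
    and gains: "\<And>j. j \<le> n \<Longrightarrow> \<nu>' j \<le> \<nu> j"
    and dominated: "\<And>k. k \<le> m \<Longrightarrow> \<nu> k \<le> \<mu> k"
    and mass: "(\<Sum>i\<le>m. \<mu> i) = 1" "(\<Sum>j\<le>n. \<nu> j) = 1"
begin

definition gain :: "nat \<Rightarrow> real" where "gain j = \<nu> j - \<nu>' j"
definition last_col :: "nat \<Rightarrow> real" where "last_col i = z i (Suc n)"
definition beyond :: "nat \<Rightarrow> nat \<Rightarrow> real" where "beyond i j = (if j \<le> m then 0 else z i j)"
definition beyond_mass :: "nat \<Rightarrow> real" where "beyond_mass i = (\<Sum>j\<le>n. beyond i j)"
definition spare :: "nat \<Rightarrow> real" where
  "spare i = (if gain i \<le> last_col i then last_col i - gain i else 0)"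
definition scale :: "nat \<Rightarrow> real" where
  "scale i = (if gain i \<le> last_col i then 1 else (\<mu> i - \<nu> i) / beyond_mass i)"
definition demand :: "nat \<Rightarrow> real" where
  "demand j = (if j \<le> m then 0 else \<nu> j) - (\<Sum>i\<le>m. scale i * beyond i j)"
definition total_spare :: real where "total_spare = (\<Sum>i\<le>m. spare i)"

text \<open>Row \<open>i\<close> puts \<open>\<nu> i\<close> on the diagonal and keeps a scaled part of its mass beyond column \<open>m\<close>;
  the part \<open>spare i\<close> of its entry in the removed column \<open>n + 1\<close> that the diagonal does not need
  is spread over the columns beyond \<open>m\<close> in proportion to their remaining demand.\<close>
definition merged :: "nat \<Rightarrow> nat \<Rightarrow> real" where
  "merged i j =
     (if i = j then \<nu> i else 0) + scale i * beyond i j + spare i * demand j / total_spare"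

lemma beyond_nonneg: "i \<le> m \<Longrightarrow> j \<le> n \<Longrightarrow> 0 \<le> beyond i j"
  by (simp add: beyond_def is_coupling_nonneg[OF coupling])

lemma spare_nonneg: "0 \<le> spare i"
  by (simp add: spare_def)

lemma spare_le_last_col: "i \<le> m \<Longrightarrow> spare i \<le> last_col i"
  using gains[of i] m_less
  by (simp add: spare_def gain_def last_col_def is_coupling_nonneg[OF coupling])

lemma total_spare_nonneg: "0 \<le> total_spare"
  by (simp add: total_spare_def sum_nonneg spare_nonneg)

lemma beyond_mass_eq: "i \<le> m \<Longrightarrow> beyond_mass i = \<mu> i - \<nu>' i - last_col i"
proof -
  assume "i \<le> m"
  have "(\<Sum>j\<le>n. z i j - beyond i j) = (\<Sum>j\<le>n. if j = i then \<nu>' i else 0)"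
    using saturated_coupling_offdiag[OF coupling _ saturated \<open>i \<le> m\<close>] \<open>i \<le> m\<close> m_less saturated
    by (intro sum.cong) (auto simp: beyond_def)
  then have "(\<Sum>j\<le>n. z i j) - beyond_mass i = \<nu>' i"
    using \<open>i \<le> m\<close> m_less by (simp add: beyond_mass_def sum_subtractf)
  moreover have "(\<Sum>j\<le>n. z i j) + last_col i = \<mu> i"
    using is_coupling_row_sum[OF coupling \<open>i \<le> m\<close>] by (simp add: last_col_def)
  ultimately show ?thesis by simp
qed

lemma scale_beyond_mass: "i \<le> m \<Longrightarrow> scale i * beyond_mass i = \<mu> i - \<nu> i - spare i"
  and scale_bounds: "i \<le> m \<Longrightarrow> 0 \<le> scale i \<and> scale i \<le> 1"
proof -
  assume "i \<le> m"
  have eq: "\<mu> i - \<nu> i = beyond_mass i + last_col i - gain i"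
    using beyond_mass_eq[OF \<open>i \<le> m\<close>] by (simp add: gain_def)
  have "scale i * beyond_mass i = \<mu> i - \<nu> i - spare i \<and> 0 \<le> scale i \<and> scale i \<le> 1"
  proof (cases "gain i \<le> last_col i")
    case True
    then show ?thesis using eq by (simp add: scale_def spare_def)
  next
    case False
    then have "\<mu> i - \<nu> i < beyond_mass i" using eq by simp
    then show ?thesis
      using False dominated[OF \<open>i \<le> m\<close>] by (simp add: scale_def spare_def divide_le_eq_1)
  qed
  then show "scale i * beyond_mass i = \<mu> i - \<nu> i - spare i" "0 \<le> scale i \<and> scale i \<le> 1"
    by auto
qed

lemma demand_low: "j \<le> m \<Longrightarrow> demand j = 0"
  by (simp add: demand_def beyond_def)

lemma demand_nonneg: "j \<le> n \<Longrightarrow> 0 \<le> demand j"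
proof (cases "j \<le> m")
  case True
  then show ?thesis by (simp add: demand_low)
next
  case False
  assume "j \<le> n"
  have "(\<Sum>i\<le>m. scale i * beyond i j) \<le> (\<Sum>i\<le>m. beyond i j)"
    using scale_bounds beyond_nonneg \<open>j \<le> n\<close> by (intro sum_mono) (auto intro: mult_left_le_one_le)
  also have "\<dots> = \<nu>' j"
    using False \<open>j \<le> n\<close> by (simp add: beyond_def is_coupling_col_sum[OF coupling])
  finally show ?thesis using False gains[OF \<open>j \<le> n\<close>] by (simp add: demand_def)
qed

lemma sum_demand: "(\<Sum>j\<le>n. demand j) = total_spare"
proof -
  have "(\<Sum>j\<le>n. if j \<le> m then 0 else \<nu> j) = (\<Sum>j\<le>n. \<nu> j) - (\<Sum>j\<le>n. if j \<le> m then \<nu> j else 0)"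
    by (simp add: sum_subtractf[symmetric] if_distrib[of "\<lambda>x. _ - x"] cong: if_cong)
  also have "(\<Sum>j\<le>n. if j \<le> m then \<nu> j else 0) = (\<Sum>j\<in>{j\<in>{..n}. j \<le> m}. \<nu> j)"
    by (rule sum.inter_filter[symmetric]) simp
  also have "{j\<in>{..n}. j \<le> m} = {..m}"
    using m_less by auto
  finally have outside: "(\<Sum>j\<le>n. if j \<le> m then 0 else \<nu> j) = 1 - (\<Sum>j\<le>m. \<nu> j)"
    using mass by simp
  have "(\<Sum>j\<le>n. \<Sum>i\<le>m. scale i * beyond i j) = (\<Sum>i\<le>m. scale i * beyond_mass i)"
    unfolding beyond_mass_def sum_distrib_left by (rule sum.swap)
  also have "\<dots> = (\<Sum>i\<le>m. \<mu> i - \<nu> i - spare i)"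
    by (simp add: scale_beyond_mass)
  finally show ?thesis
    using outside mass by (simp add: demand_def total_spare_def sum_subtractf)
qed

lemma spare_cancel: "i \<le> m \<Longrightarrow> spare i * total_spare / total_spare = spare i"
  using spare_nonneg sum_nonneg_eq_0_iff[of "{..m}" spare]
  by (cases "total_spare = 0") (auto simp: total_spare_def)

lemma demand_cancel: "j \<le> n \<Longrightarrow> demand j * total_spare / total_spare = demand j"
  using demand_nonneg sum_nonneg_eq_0_iff[of "{..n}" demand]
  by (cases "total_spare = 0") (auto simp: sum_demand)

lemma merged_is_coupling: "is_coupling \<mu> \<nu> m n merged"
  unfolding is_coupling_def
proof (intro conjI allI impI)
  fix i j assume "i \<le> m" "j \<le> n"
  moreover have "0 \<le> \<nu> i"
    using gains[of i] is_coupling_marginals_nonneg(2)[OF coupling, of i] \<open>i \<le> m\<close> m_less by simp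
  ultimately show "0 \<le> merged i j"
    unfolding merged_def
    using scale_bounds beyond_nonneg spare_nonneg demand_nonneg total_spare_nonneg
    by (intro add_nonneg_nonneg mult_nonneg_nonneg divide_nonneg_nonneg) auto
next
  fix i assume "i \<le> m"
  have "(\<Sum>j\<le>n. merged i j)
      = \<nu> i + scale i * beyond_mass i + spare i * (\<Sum>j\<le>n. demand j) / total_spare"
    unfolding merged_def beyond_mass_def using \<open>i \<le> m\<close> m_less
    by (simp add: sum.distrib sum_distrib_left sum_divide_distrib)
  then show "(\<Sum>j\<le>n. merged i j) = \<mu> i"
    using \<open>i \<le> m\<close> by (simp add: scale_beyond_mass sum_demand spare_cancel)
next
  fix j assume "j \<le> n"
  have "(\<Sum>i\<le>m. merged i j)
      = (if j \<le> m then \<nu> j else 0) + (\<Sum>i\<le>m. scale i * beyond i j)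
        + demand j * total_spare / total_spare"
    unfolding merged_def total_spare_def
    by (simp add: sum.distrib sum_distrib_right sum_divide_distrib sum.delta' mult.commute)
  also have "\<dots> = (if j \<le> m then \<nu> j else 0) + (\<Sum>i\<le>m. scale i * beyond i j) + demand j"
    using demand_cancel[OF \<open>j \<le> n\<close>] by simp
  finally show "(\<Sum>i\<le>m. merged i j) = \<nu> j"
    by (simp add: demand_def)
qed

lemma spread_cost_le:
  assumes nonneg: "\<And>i j. i \<le> m \<Longrightarrow> j \<le> Suc n \<Longrightarrow> 0 \<le> C i j"
    and cheaper: "\<And>i j. i \<le> m \<Longrightarrow> m < j \<Longrightarrow> j \<le> n \<Longrightarrow> C i j \<le> C i (Suc n)"
  shows "(\<Sum>i\<le>m. \<Sum>j\<le>n. spare i * demand j / total_spare * C i j) \<le> (\<Sum>i\<le>m. last_col i * C i (Suc n))"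
proof -
  have "(\<Sum>i\<le>m. \<Sum>j\<le>n. spare i * demand j / total_spare * C i j)
      \<le> (\<Sum>i\<le>m. \<Sum>j\<le>n. spare i * demand j / total_spare * C i (Suc n))"
  proof (intro sum_mono)
    fix i j assume "i \<in> {..m}" "j \<in> {..n}"
    show "spare i * demand j / total_spare * C i j \<le> spare i * demand j / total_spare * C i (Suc n)"
    proof (cases "j \<le> m")
      case True
      then show ?thesis by (simp add: demand_low)
    next
      case False
      then show ?thesis
        using \<open>i \<in> {..m}\<close> \<open>j \<in> {..n}\<close> cheaper[of i j] spare_nonneg[of i] demand_nonneg[of j]
          total_spare_nonneg
        by (intro mult_left_mono) auto
    qed
  qed
  also have "\<dots> = (\<Sum>i\<le>m. spare i * (\<Sum>j\<le>n. demand j) / total_spare * C i (Suc n))"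
    by (simp add: sum_distrib_left sum_distrib_right sum_divide_distrib)
  also have "\<dots> = (\<Sum>i\<le>m. spare i * C i (Suc n))"
    by (simp add: sum_demand spare_cancel)
  also have "\<dots> \<le> (\<Sum>i\<le>m. last_col i * C i (Suc n))"
    using spare_le_last_col nonneg by (intro sum_mono mult_right_mono) auto
  finally show ?thesis .
qed

lemma merged_cost_le:
  assumes nonneg: "\<And>i j. i \<le> m \<Longrightarrow> j \<le> Suc n \<Longrightarrow> 0 \<le> C i j"
    and diag: "\<And>k. k \<le> m \<Longrightarrow> C k k = 0"
    and cheaper: "\<And>i j. i \<le> m \<Longrightarrow> m < j \<Longrightarrow> j \<le> n \<Longrightarrow> C i j \<le> C i (Suc n)"
  shows "transport_cost C m n merged \<le> transport_cost C m (Suc n) z"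
proof -
  have "transport_cost C m n merged = (\<Sum>i\<le>m. \<Sum>j\<le>n. (if i = j then \<nu> i else 0) * C i j)
      + (\<Sum>i\<le>m. \<Sum>j\<le>n. scale i * beyond i j * C i j)
      + (\<Sum>i\<le>m. \<Sum>j\<le>n. spare i * demand j / total_spare * C i j)"
    unfolding transport_cost_def merged_def by (simp add: distrib_right sum.distrib)
  moreover have "(\<Sum>i\<le>m. \<Sum>j\<le>n. (if i = j then \<nu> i else 0) * C i j) = 0"
    using diag by (intro sum.neutral ballI) auto
  moreover have "(\<Sum>i\<le>m. \<Sum>j\<le>n. scale i * beyond i j * C i j) \<le> (\<Sum>i\<le>m. \<Sum>j\<le>n. z i j * C i j)"
  proof (intro sum_mono)
    fix i j assume "i \<in> {..m}" "j \<in> {..n}"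
    then have "scale i * beyond i j \<le> z i j" "0 \<le> C i j"
      using scale_bounds[of i] is_coupling_nonneg[OF coupling, of i j] nonneg
      by (auto simp: beyond_def intro: mult_left_le_one_le)
    then show "scale i * beyond i j * C i j \<le> z i j * C i j"
      by (rule mult_right_mono)
  qed
  moreover have "transport_cost C m (Suc n) z
      = (\<Sum>i\<le>m. \<Sum>j\<le>n. z i j * C i j) + (\<Sum>i\<le>m. last_col i * C i (Suc n))"
    by (simp add: transport_cost_def last_col_def sum.distrib)
  ultimately show ?thesis
    using spread_cost_le[where C = C, OF nonneg cheaper] by linarith
qed

end

section \<open>Basic properties of the distances\<close>

declare dd.simps [simp del]

lemma dd_0_left: "dd \<pi> 0 b = (if b = 0 then 0 else 1)"
  by (subst dd.simps) simp

lemma dd_0_right: "dd \<pi> a 0 = (if a = 0 then 0 else 1)"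
  by (subst dd.simps) simp

lemma dd_Suc_Suc: "dd \<pi> (Suc m) (Suc n) = Inf (transport_cost (dd \<pi>) m n ` couplings \<pi> m n)"
  by (subst dd.simps) (simp add: transport_cost_def)

context
  fixes \<pi> :: "nat \<Rightarrow> nat \<Rightarrow> real"
  assumes admissible: "admissible_seq \<pi>"
begin

lemma admissible_nonneg: "0 \<le> \<pi> n i"
  using admissible by (simp add: admissible_seq_def)

lemma admissible_sum: "(\<Sum>i\<le>n. \<pi> n i) = 1"
  using admissible by (simp add: admissible_seq_def)

lemma product_in_couplings: "(\<lambda>i j. \<pi> m i * \<pi> n j) \<in> couplings \<pi> m n"
  by (simp add: mem_couplings_iff product_is_coupling admissible_nonneg admissible_sum)

lemma dd_greatest:
  "(\<And>z. z \<in> couplings \<pi> m n \<Longrightarrow> x \<le> transport_cost (dd \<pi>) m n z) \<Longrightarrow> x \<le> dd \<pi> (Suc m) (Suc n)"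
  unfolding dd_Suc_Suc using product_in_couplings by (auto intro!: cInf_greatest)

lemma dd_nonneg: "0 \<le> dd \<pi> a b"
proof (induction "a + b" arbitrary: a b rule: less_induct)
  case less
  show ?case
  proof (cases "a = 0 \<or> b = 0")
    case True
    then show ?thesis by (auto simp: dd_0_left dd_0_right)
  next
    case False
    then obtain m n where "a = Suc m" "b = Suc n"
      by (metis not0_implies_Suc)
    moreover have "0 \<le> transport_cost (dd \<pi>) m n z" if "z \<in> couplings \<pi> m n" for z
      using that less \<open>a = Suc m\<close> \<open>b = Suc n\<close>
      by (auto simp: transport_cost_def mem_couplings_iff is_coupling_def intro!: sum_nonneg)
    ultimately show ?thesis by (auto intro: dd_greatest)
  qed
qed

lemma dd_le_cost: "z \<in> couplings \<pi> m n \<Longrightarrow> dd \<pi> (Suc m) (Suc n) \<le> transport_cost (dd \<pi>) m n z"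
  unfolding dd_Suc_Suc
  by (rule cInf_lower)
    (auto simp: bdd_below_def transport_cost_def mem_couplings_iff is_coupling_def
      intro!: exI[of _ 0] sum_nonneg mult_nonneg_nonneg dd_nonneg)

lemma dd_le_by_transfer:
  assumes "\<And>z. z \<in> couplings \<pi> m n
    \<Longrightarrow> \<exists>z' \<in> couplings \<pi> m' n'. transport_cost (dd \<pi>) m' n' z' \<le> transport_cost (dd \<pi>) m n z"
  shows "dd \<pi> (Suc m') (Suc n') \<le> dd \<pi> (Suc m) (Suc n)"
  using assms dd_le_cost by (meson dd_greatest order_trans)

lemma dd_le_1: "dd \<pi> a b \<le> 1"
proof (induction "a + b" arbitrary: a b rule: less_induct)
  case less
  show ?case
  proof (cases "a = 0 \<or> b = 0")
    case True
    then show ?thesis by (auto simp: dd_0_left dd_0_right)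
  next
    case False
    then obtain m n where mn: "a = Suc m" "b = Suc n"
      by (metis not0_implies_Suc)
    have "transport_cost (dd \<pi>) m n (\<lambda>i j. \<pi> m i * \<pi> n j) \<le> (\<Sum>i\<le>m. \<Sum>j\<le>n. \<pi> m i * \<pi> n j * 1)"
      unfolding transport_cost_def using less mn
      by (intro sum_mono mult_left_mono) (auto simp: admissible_nonneg)
    also have "\<dots> = 1"
      by (simp add: admissible_sum flip: sum_distrib_left sum_distrib_right)
    finally show ?thesis
      using dd_le_cost[OF product_in_couplings] mn by (meson order_trans)
  qed
qed

lemma dd_self: "dd \<pi> a a = 0"
proof (induction a rule: less_induct)
  case (less a)
  show ?case
  proof (cases a)
    case 0
    then show ?thesis by (simp add: dd_0_left)
  next
    case (Suc m)
    have diag: "(\<lambda>i j. if i = j then \<pi> m i else 0) \<in> couplings \<pi> m m"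
      by (simp add: mem_couplings_iff diagonal_is_coupling admissible_nonneg)
    have "transport_cost (dd \<pi>) m m (\<lambda>i j. if i = j then \<pi> m i else 0) = (\<Sum>i\<le>m. \<pi> m i * dd \<pi> i i)"
      unfolding transport_cost_def
      by (intro sum.cong refl) (simp add: if_distrib[where f="\<lambda>x. x * _"] sum.delta cong: if_cong)
    also have "\<dots> = 0"
      using less Suc by simp
    finally show ?thesis
      using dd_le_cost[OF diag] dd_nonneg[of a a] Suc by simp
  qed
qed

lemma dd_triangle: "dd \<pi> a c \<le> dd \<pi> a b + dd \<pi> b c"
proof (induction "a + b + c" arbitrary: a b c rule: less_induct)
  case less
  show ?case
  proof (cases "a = 0 \<or> b = 0 \<or> c = 0")
    case True
    then show ?thesis
      using dd_nonneg[of a b] dd_nonneg[of b c] dd_le_1[of a c] dd_nonneg[of a c]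
      by (auto simp: dd_0_left dd_0_right)
  next
    case False
    then obtain a' b' c' where abc: "a = Suc a'" "b = Suc b'" "c = Suc c'"
      by (metis not0_implies_Suc)
    have smaller: "dd \<pi> i k \<le> dd \<pi> i j + dd \<pi> j k" if "i \<le> a'" "j \<le> b'" "k \<le> c'" for i j k
      using less that abc by simp
    have glued: "dd \<pi> a c \<le> transport_cost (dd \<pi>) a' b' z1 + transport_cost (dd \<pi>) b' c' z2"
      if z: "z1 \<in> couplings \<pi> a' b'" "z2 \<in> couplings \<pi> b' c'" for z1 z2
    proof -
      obtain u where "u \<in> couplings \<pi> a' c'"
        and "transport_cost (dd \<pi>) a' c' u
          \<le> transport_cost (dd \<pi>) a' b' z1 + transport_cost (dd \<pi>) b' c' z2"
        using coupling_composition[where C = "dd \<pi>", OF z[unfolded mem_couplings_iff] smaller]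
        unfolding mem_couplings_iff by blast
      then show ?thesis using dd_le_cost abc by (meson order_trans)
    qed
    have "dd \<pi> a c - transport_cost (dd \<pi>) b' c' z2 \<le> dd \<pi> (Suc a') (Suc b')"
      if "z2 \<in> couplings \<pi> b' c'" for z2
      by (rule dd_greatest) (use glued that in force)
    then have "dd \<pi> a c - dd \<pi> a b \<le> dd \<pi> (Suc b') (Suc c')"
      using abc by (intro dd_greatest) force
    then show ?thesis using abc by simp
  qed
qed

end

section \<open>Monotonicity under (H)\<close>

context
  fixes \<pi> :: "nat \<Rightarrow> nat \<Rightarrow> real"
  assumes admissible: "admissible_seq \<pi>" and H: "cond_H \<pi>"
begin

lemma cond_H_antimono: "i \<le> m \<Longrightarrow> m \<le> n \<Longrightarrow> \<pi> n i \<le> \<pi> m i"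
proof -
  assume "i \<le> m" "m \<le> n"
  from \<open>m \<le> n\<close> show ?thesis
  proof (induction rule: dec_induct)
    case (step k)
    have "i \<le> k" using \<open>i \<le> m\<close> \<open>m \<le> k\<close> by simp
    then have "\<pi> (Suc k) i \<le> \<pi> k i"
      using H unfolding cond_H_def by (metis diff_Suc_1 le_add1 less_Suc_eq_le plus_1_eq_Suc)
    with step.IH show ?case by simp
  qed simp
qed

lemma exists_saturated_dd_coupling:
  assumes "z \<in> couplings \<pi> m n" "m \<le> n"
  obtains z' where "is_coupling (\<pi> m) (\<pi> n) m n z'"
    and "transport_cost (dd \<pi>) m n z' \<le> transport_cost (dd \<pi>) m n z"
    and "\<And>k. k \<le> m \<Longrightarrow> z' k k = \<pi> n k"
  by (rule exists_saturated_coupling[OF assms(1)[unfolded mem_couplings_iff] assms(2),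
        where C = "dd \<pi>"])
    (use assms(2) that in
      \<open>auto simp: cond_H_antimono dd_self[OF admissible] dd_triangle[OF admissible]\<close>)

lemma dd_row_step:
  assumes "m < n" and cheaper: "\<And>k j. k \<le> m \<Longrightarrow> m < j \<Longrightarrow> j \<le> n \<Longrightarrow> dd \<pi> (Suc m) j \<le> dd \<pi> k j"
  shows "dd \<pi> (Suc (Suc m)) (Suc n) \<le> dd \<pi> (Suc m) (Suc n)"
proof (rule dd_le_by_transfer[OF admissible])
  fix z assume "z \<in> couplings \<pi> m n"
  then obtain z1 where z1: "is_coupling (\<pi> m) (\<pi> n) m n z1"
    "transport_cost (dd \<pi>) m n z1 \<le> transport_cost (dd \<pi>) m n z" "\<And>k. k \<le> m \<Longrightarrow> z1 k k = \<pi> n k"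
    using exists_saturated_dd_coupling \<open>m < n\<close> by (metis less_imp_le)
  interpret row_transfer "\<pi> m" "\<pi> (Suc m)" "\<pi> n" m n z1
    using z1 \<open>m < n\<close> admissible_sum[OF admissible, of "Suc m"]
    by unfold_locales (auto simp: cond_H_antimono admissible_sum[OF admissible])
  show "\<exists>z' \<in> couplings \<pi> (Suc m) n.
      transport_cost (dd \<pi>) (Suc m) n z' \<le> transport_cost (dd \<pi>) m n z"
    using transferred_is_coupling transferred_cost_le[of "dd \<pi>", OF cheaper] z1(2)
    by (meson mem_couplings_iff order_trans)
qed

lemma dd_column_step:
  assumes "m < n" and cheaper: "\<And>i j. i \<le> m \<Longrightarrow> m < j \<Longrightarrow> j \<le> n \<Longrightarrow> dd \<pi> i j \<le> dd \<pi> i (Suc n)"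
  shows "dd \<pi> (Suc m) (Suc n) \<le> dd \<pi> (Suc m) (Suc (Suc n))"
proof (rule dd_le_by_transfer[OF admissible])
  fix z assume "z \<in> couplings \<pi> m (Suc n)"
  then obtain z1 where z1: "is_coupling (\<pi> m) (\<pi> (Suc n)) m (Suc n) z1"
    "transport_cost (dd \<pi>) m (Suc n) z1 \<le> transport_cost (dd \<pi>) m (Suc n) z"
    "\<And>k. k \<le> m \<Longrightarrow> z1 k k = \<pi> (Suc n) k"
    using exists_saturated_dd_coupling \<open>m < n\<close> by (metis less_imp_le le_Suc_eq)
  interpret column_merge "\<pi> m" "\<pi> n" "\<pi> (Suc n)" m n z1
    using z1 \<open>m < n\<close> by unfold_locales (auto simp: cond_H_antimono admissible_sum[OF admissible])
  show "\<exists>z' \<in> couplings \<pi> m n. transport_cost (dd \<pi>) m n z' \<le> transport_cost (dd \<pi>) m (Suc n) z"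
    using merged_is_coupling z1(2)
      merged_cost_le[of "dd \<pi>", OF dd_nonneg[OF admissible] dd_self[OF admissible] cheaper]
    by (meson mem_couplings_iff order_trans)
qed

lemma dd_Suc_left_le: "Suc a \<le> b \<Longrightarrow> dd \<pi> (Suc a) b \<le> dd \<pi> a b"
proof (induction b arbitrary: a rule: less_induct)
  case (less b)
  consider "Suc a = b" | "a = 0" "Suc a < b" | m n where "a = Suc m" "b = Suc n" "m < n"
    using less.prems by (cases a; cases b) (auto simp: le_less)
  then show ?case
  proof cases
    case 1
    then show ?thesis using dd_self[OF admissible] dd_nonneg[OF admissible] by simp
  next
    case 2
    then show ?thesis using dd_le_1[OF admissible] by (simp add: dd_0_left)
  next
    case 3
    have "dd \<pi> (Suc m) j \<le> dd \<pi> k j" if "k \<le> m" "m < j" "j \<le> n" for k j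
    proof -
      from \<open>k \<le> m\<close> have "k \<le> Suc m" by simp
      then show ?thesis
      proof (induction rule: dec_induct)
        case (step i)
        then show ?case using less.IH[of j i] that 3 by simp
      qed simp
    qed
    then show ?thesis using dd_row_step[OF \<open>m < n\<close>] 3 by simp
  qed
qed

lemma dd_le_Suc_right: "a \<le> b \<Longrightarrow> dd \<pi> a b \<le> dd \<pi> a (Suc b)"
proof (induction b arbitrary: a rule: less_induct)
  case (less b)
  consider "a = b" | "a = 0" "a < b" | m n where "a = Suc m" "b = Suc n" "m < n"
    using less.prems by (cases a; cases b) (auto simp: le_less)
  then show ?case
  proof cases
    case 1
    then show ?thesis using dd_self[OF admissible] dd_nonneg[OF admissible] by simp
  next
    case 2
    then show ?thesis by (simp add: dd_0_left)
  next
    case 3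
    have "dd \<pi> i j \<le> dd \<pi> i (Suc n)" if "i \<le> m" "m < j" "j \<le> n" for i j
    proof -
      from \<open>j \<le> n\<close> have "j \<le> Suc n" by simp
      then show ?thesis
      proof (induction rule: dec_induct)
        case (step k)
        then show ?case using less.IH[of k i] that 3 by simp
      qed simp
    qed
    then show ?thesis using dd_column_step[OF \<open>m < n\<close>] 3 by simp
  qed
qed

end

theorem theorem4:
  fixes \<pi> :: "nat \<Rightarrow> nat \<Rightarrow> real"
  assumes "admissible_seq \<pi>" and "cond_H \<pi>"
  shows "(\<forall>m n :: int. 0 \<le> m \<and> m \<le> n \<longrightarrow> d \<pi> m n \<le> d \<pi> (m - 1) n) \<and>
         (\<forall>m n :: int. -1 \<le> m \<and> m \<le> n \<longrightarrow> d \<pi> m n \<le> d \<pi> m (n + 1))"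
proof (intro conjI allI impI; elim conjE)
  fix m n :: int
  assume "0 \<le> m" "m \<le> n"
  then show "d \<pi> m n \<le> d \<pi> (m - 1) n"
    using dd_Suc_left_le[OF assms, of "nat m" "nat (n + 1)"]
    by (simp add: d_def Suc_nat_eq_nat_zadd1 add.commute)
next
  fix m n :: int
  assume "-1 \<le> m" "m \<le> n"
  then show "d \<pi> m n \<le> d \<pi> m (n + 1)"
    using dd_le_Suc_right[OF assms, of "nat (m + 1)" "nat (n + 1)"]
    by (simp add: d_def Suc_nat_eq_nat_zadd1 add.commute)
qed

end
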